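(* Let $L:\mathbb{R}^d\to\mathbb{R}^{\mathcal{Y}}_+$ be a polyhedral loss and $\gamma$ a property. Then $L$ indirectly elicits $\gamma$ if and only if $L$ tightly embeds some discrete loss $\ell$ that indirectly elicits $\gamma$.
   Context: $\mathcal{Y}$ is a finite label set, $\Delta_{\mathcal{Y}}$ the simplex, $\mathbb{R}^{\mathcal{Y}}_+$ the nonnegative orthant. A property $\gamma:\Delta_{\mathcal{Y}}\rightrightarrows\mathcal{R}'$ maps each $p$ to a nonempty subset of $\mathcal{R}'$, with level sets $\gamma_r=\{p:r\in\gamma(p)\}$. A loss $L:\mathcal{R}\to\mathbb{R}^{\mathcal{Y}}_+$ is minimizable if $\inf_r\langle p,L(r)\rangle$ is attained for all $p$; then $\Gamma=\mathrm{prop}[L]$, $\Gamma(p)=\arg\min_r\langle p,L(r)\rangle$. Discrete: finite report set. Polyhedral: $L:\mathbb{R}^d\to\mathbb{R}^{\mathcal{Y}}_+$ with each coordinate a max of finitely many affine functions (such losses are minimizable). A minimizable loss with report set $\mathcal{R}$ indirectly elicits $\gamma$ if for every $r\in\mathcal{R}$ there is $r'\in\mathcal{R}'$ with $\Gamma_r\subseteq\gamma_{r'}$. $\mathcal{S}$ is representative for $\ell$ if $\mathrm{prop}[\ell](p)\cap\mathcal{S}\neq\emptyset$ for all $p$, minimum representative if of smallest cardinality. $L$ embeds $\ell$ if there exist a representative set $\mathcal{S}$ for $\ell$ and injective $\varphi:\mathcal{S}\to\mathbb{R}^d$ with $L(\varphi(r))=\ell(r)$ for $r\in\mathcal{S}$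 and $r\in\mathrm{prop}[\ell](p)\iff\varphi(r)\in\mathrm{prop}[L](p)$ for all $p$, $r\in\mathcal{S}$; tightly if $\mathcal{S}$ can be taken minimum representative. *)

theory Defs
  imports "HOL-Analysis.Analysis"
begin

definition prob_simplex :: "('y::finite \<Rightarrow> real) set" where
  "prob_simplex = {p. (\<forall>y. 0 \<le> p y) \<and> (\<Sum>y\<in>UNIV. p y) = 1}"

definition exp_loss :: "('y::finite \<Rightarrow> real) \<Rightarrow> ('y \<Rightarrow> real) \<Rightarrow> real" where
  "exp_loss p v = (\<Sum>y\<in>UNIV. p y * v y)"

definition is_property :: "(('y::finite \<Rightarrow> real) \<Rightarrow> 'b set) \<Rightarrow> bool" where
  "is_property \<gamma> \<longleftrightarrow> (\<forall>p\<in>prob_simplex. \<gamma> p \<noteq> {})"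

definition level_set :: "(('y::finite \<Rightarrow> real) \<Rightarrow> 'b set) \<Rightarrow> 'b \<Rightarrow> ('y \<Rightarrow> real) set" where
  "level_set \<gamma> r = {p\<in>prob_simplex. r \<in> \<gamma> p}"

definition minimizable :: "('r \<Rightarrow> ('y::finite \<Rightarrow> real)) \<Rightarrow> 'r set \<Rightarrow> bool" where
  "minimizable L R \<longleftrightarrow> (\<forall>p\<in>prob_simplex. \<exists>r\<in>R. \<forall>r'\<in>R. exp_loss p (L r) \<le> exp_loss p (L r'))"

definition prop_of :: "('r \<Rightarrow> ('y::finite \<Rightarrow> real)) \<Rightarrow> 'r set \<Rightarrow> ('y \<Rightarrow> real) \<Rightarrow> 'r set" where
  "prop_of L R p = {r\<in>R. \<forall>r'\<in>R. exp_loss p (L r) \<le> exp_loss p (L r')}"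

definition indirectly_elicits ::
  "('r \<Rightarrow> ('y::finite \<Rightarrow> real)) \<Rightarrow> 'r set \<Rightarrow> (('y \<Rightarrow> real) \<Rightarrow> 'b set) \<Rightarrow> bool" where
  "indirectly_elicits L R \<gamma> \<longleftrightarrow> minimizable L R \<and>
     (\<forall>r\<in>R. \<exists>r'. level_set (prop_of L R) r \<subseteq> level_set \<gamma> r')"

definition nonneg_loss :: "('r \<Rightarrow> ('y \<Rightarrow> real)) \<Rightarrow> 'r set \<Rightarrow> bool" where
  "nonneg_loss L R \<longleftrightarrow> (\<forall>r\<in>R. \<forall>y. 0 \<le> L r y)"

definition discrete_loss :: "('r \<Rightarrow> ('y \<Rightarrow> real)) \<Rightarrow> 'r set \<Rightarrow> bool" where
  "discrete_loss l R \<longleftrightarrow> finite R \<and> R \<noteq> {} \<and> nonneg_loss l R"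

definition polyhedral :: "(real^'d \<Rightarrow> ('y \<Rightarrow> real)) \<Rightarrow> bool" where
  "polyhedral L \<longleftrightarrow> nonneg_loss L UNIV \<and>
     (\<forall>y. \<exists>A :: ((real^'d) \<times> real) set. finite A \<and> A \<noteq> {} \<and>
          (\<forall>u. L u y = Max ((\<lambda>(a, b). a \<bullet> u + b) ` A)))"

definition representative :: "('r \<Rightarrow> ('y::finite \<Rightarrow> real)) \<Rightarrow> 'r set \<Rightarrow> 'r set \<Rightarrow> bool" where
  "representative l R S \<longleftrightarrow> S \<subseteq> R \<and> (\<forall>p\<in>prob_simplex. prop_of l R p \<inter> S \<noteq> {})"

definition min_representative :: "('r \<Rightarrow> ('y::finite \<Rightarrow> real)) \<Rightarrow> 'r set \<Rightarrow> 'r set \<Rightarrow> bool" where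
  "min_representative l R S \<longleftrightarrow> representative l R S \<and> finite S \<and>
     (\<forall>S'. representative l R S' \<longrightarrow> card S \<le> card S')"

definition embeds_via ::
  "(real^'d \<Rightarrow> ('y::finite \<Rightarrow> real)) \<Rightarrow> ('r \<Rightarrow> ('y \<Rightarrow> real)) \<Rightarrow> 'r set \<Rightarrow> 'r set \<Rightarrow> ('r \<Rightarrow> real^'d) \<Rightarrow> bool" where
  "embeds_via L l R S \<phi> \<longleftrightarrow> inj_on \<phi> S \<and> (\<forall>r\<in>S. L (\<phi> r) = l r) \<and>
     (\<forall>p\<in>prob_simplex. \<forall>r\<in>S. r \<in> prop_of l R p \<longleftrightarrow> \<phi> r \<in> prop_of L UNIV p)"

definition embeds :: "(real^'d \<Rightarrow> ('y::finite \<Rightarrow> real)) \<Rightarrow> ('r \<Rightarrow> ('y \<Rightarrow> real)) \<Rightarrow> 'r set \<Rightarrow> bool" where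
  "embeds L l R \<longleftrightarrow> (\<exists>S \<phi>. representative l R S \<and> embeds_via L l R S \<phi>)"

definition tightly_embeds :: "(real^'d \<Rightarrow> ('y::finite \<Rightarrow> real)) \<Rightarrow> ('r \<Rightarrow> ('y \<Rightarrow> real)) \<Rightarrow> 'r set \<Rightarrow> bool" where
  "tightly_embeds L l R \<longleftrightarrow> (\<exists>S \<phi>. min_representative l R S \<and> embeds_via L l R S \<phi>)"

end

theory Submission
  imports Defs
begin

(* A polyhedral loss is affine wherever its pattern of active affine pieces is fixed, so pushing a
   report along a line within such a region shows that optimality depends only on the pattern.
   There are finitely many patterns, hence a finite representative set; restricting L to one of
   least size gives a discrete loss that L tightly embeds and whose level sets refine those of L.
   Conversely, if L embeds l through a finite representative set, an averaging argument puts every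
   level set of L inside the level set of an embedded report, i.e. inside a level set of l. In both
   directions indirect elicitation then transfers by transitivity. *)

definition affine_fun :: "'a::real_inner \<times> real \<Rightarrow> 'a \<Rightarrow> real" where
  "affine_fun ab x = fst ab \<bullet> x + snd ab"

definition max_affine :: "('a::real_inner \<times> real) set \<Rightarrow> 'a \<Rightarrow> real" where
  "max_affine A x = Max ((\<lambda>ab. affine_fun ab x) ` A)"

definition active_pieces :: "('a::real_inner \<times> real) set \<Rightarrow> 'a \<Rightarrow> ('a \<times> real) set" where
  "active_pieces A x = {ab \<in> A. affine_fun ab x = max_affine A x}"

lemma max_affine_pairs: "max_affine A x = Max ((\<lambda>(a, b). a \<bullet> x + b) ` A)"
  unfolding max_affine_def affine_fun_def by (simp add: case_prod_beta)

lemma affine_fun_extrapolate: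
  "affine_fun ab (u + t *\<^sub>R (u - v)) = affine_fun ab u + t * (affine_fun ab u - affine_fun ab v)"
  unfolding affine_fun_def by (simp add: inner_add_right inner_diff_right algebra_simps)

lemma max_affine_ge: "finite A \<Longrightarrow> ab \<in> A \<Longrightarrow> affine_fun ab x \<le> max_affine A x"
  unfolding max_affine_def by (auto intro!: Max_ge)

lemma active_pieces_nonempty:
  assumes "finite A" "A \<noteq> {}"
  shows "active_pieces A x \<noteq> {}"
proof -
  have "max_affine A x \<in> (\<lambda>ab. affine_fun ab x) ` A"
    unfolding max_affine_def using assms by (intro Max_in) auto
  then obtain ab where "ab \<in> A" "affine_fun ab x = max_affine A x" by auto
  then show ?thesis unfolding active_pieces_def by blast
qed

lemma max_affine_extrapolate:
  fixes u v :: "'a::real_inner"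
  assumes "finite A" "A \<noteq> {}" and same: "active_pieces A u = active_pieces A v"
  shows "\<forall>\<^sub>F t in at_right 0. max_affine A (u + t *\<^sub>R (u - v)) =
           max_affine A u + t * (max_affine A u - max_affine A v)"
proof -
  obtain c where c: "c \<in> active_pieces A u"
    using active_pieces_nonempty[OF assms(1,2)] by blast
  then have cv: "c \<in> active_pieces A v" using same by simp
  have "\<forall>\<^sub>F t in at_right 0. \<forall>ab\<in>A.
          affine_fun ab (u + t *\<^sub>R (u - v)) \<le> affine_fun c (u + t *\<^sub>R (u - v))"
  proof (intro eventually_ball_finite \<open>finite A\<close> ballI)
    fix ab assume ab: "ab \<in> A"
    show "\<forall>\<^sub>F t in at_right 0. affine_fun ab (u + t *\<^sub>R (u - v)) \<le> affine_fun c (u + t *\<^sub>R (u - v))"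
    proof (cases "ab \<in> active_pieces A u")
      case True
      then have "ab \<in> active_pieces A v" using same by simp
      then show ?thesis using True c cv by (simp add: affine_fun_extrapolate active_pieces_def)
    next
      case False
      define du where "du = affine_fun ab u - max_affine A u"
      define dv where "dv = affine_fun ab v - max_affine A v"
      have "du < 0"
        using False max_affine_ge[OF \<open>finite A\<close> ab, of u] ab
        unfolding du_def active_pieces_def by auto
      moreover have "((\<lambda>t. du + t * (du - dv)) \<longlongrightarrow> du + 0 * (du - dv)) (at_right 0)"
        by (intro tendsto_intros)
      ultimately have "\<forall>\<^sub>F t in at_right 0. du + t * (du - dv) < 0"
        using order_tendstoD(2) by fastforce
      then show ?thesis
      proof eventually_elim
        case (elim t)
        then show ?case using c cv unfolding affine_fun_extrapolate
          by (simp add: du_def dv_def active_pieces_def algebra_simps)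
      qed
    qed
  qed
  then show ?thesis
  proof eventually_elim
    case (elim t)
    have "max_affine A (u + t *\<^sub>R (u - v)) = affine_fun c (u + t *\<^sub>R (u - v))"
      unfolding max_affine_def using elim c \<open>finite A\<close>
      by (intro Max_eqI) (auto simp: active_pieces_def)
    then show ?case using c cv unfolding affine_fun_extrapolate by (simp add: active_pieces_def)
  qed
qed

text \<open>\<open>L\<close> is affine on a short ray from \<open>u\<close> pointing away from \<open>v\<close>, so optimality of \<open>u\<close> at \<open>p\<close>
  forbids \<open>v\<close> to have larger expected loss.\<close>
lemma prop_of_max_affine_same_active:
  fixes L :: "'a::real_inner \<Rightarrow> ('y::finite \<Rightarrow> real)"
  assumes A: "\<And>y. finite (A y)" "\<And>y. A y \<noteq> {}" "\<And>x y. L x y = max_affine (A y) x"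
    and same: "\<And>y. active_pieces (A y) u = active_pieces (A y) v"
    and opt: "u \<in> prop_of L UNIV p"
  shows "v \<in> prop_of L UNIV p"
proof -
  have "\<forall>\<^sub>F t in at_right 0. 0 < t \<and>
          (\<forall>y. L (u + t *\<^sub>R (u - v)) y = L u y + t * (L u y - L v y))"
    unfolding A(3) using eventually_at_right_less
    by (intro eventually_conj eventually_all_finite allI max_affine_extrapolate A(1,2) same)
  then obtain t where t: "0 < t" "\<And>y. L (u + t *\<^sub>R (u - v)) y = L u y + t * (L u y - L v y)"
    using eventually_happens'[OF trivial_limit_at_right_real] by blast
  have "exp_loss p (L (u + t *\<^sub>R (u - v))) =
          exp_loss p (L u) + t * (exp_loss p (L u) - exp_loss p (L v))"
    unfolding exp_loss_def t(2)
    by (simp add: algebra_simps sum.distrib sum_subtractf sum_distrib_left)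
  moreover have "exp_loss p (L u) \<le> exp_loss p (L (u + t *\<^sub>R (u - v)))"
    using opt unfolding prop_of_def by auto
  ultimately have "exp_loss p (L v) \<le> exp_loss p (L u)"
    using t(1) by (simp add: zero_le_mult_iff)
  then show ?thesis using opt unfolding prop_of_def by (auto intro: order_trans)
qed

lemma polyhedral_finite_representative:
  fixes L :: "real^'d \<Rightarrow> ('y::finite \<Rightarrow> real)"
  assumes "polyhedral L" and "minimizable L UNIV"
  shows "\<exists>S. finite S \<and> representative L UNIV S"
proof -
  have "\<forall>y. \<exists>A. finite A \<and> A \<noteq> {} \<and> (\<forall>x. L x y = max_affine A x)"
    using assms(1) unfolding polyhedral_def max_affine_pairs by blast
  then obtain A where A: "\<And>y. finite (A y)" "\<And>y. A y \<noteq> {}" "\<And>x y. L x y = max_affine (A y) x"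
    unfolding choice_iff by blast
  define pattern where "pattern x = (\<lambda>y. active_pieces (A y) x)" for x
  define pick where "pick P = (SOME x. pattern x = P)" for P
  have "range pattern \<subseteq> Pi\<^sub>E UNIV (\<lambda>y. Pow (A y))"
    unfolding pattern_def active_pieces_def by auto
  moreover have "finite (Pi\<^sub>E UNIV (\<lambda>y. Pow (A y)))"
    using A(1) by (intro finite_PiE) auto
  ultimately have "finite (pick ` range pattern)"
    using finite_subset by blast
  moreover have "representative L UNIV (pick ` range pattern)"
    unfolding representative_def
  proof (intro conjI subset_UNIV ballI)
    fix p :: "'y \<Rightarrow> real" assume "p \<in> prob_simplex"
    then obtain u where u: "u \<in> prop_of L UNIV p"
      using assms(2) unfolding minimizable_def prop_of_def by auto
    have "pattern (pick (pattern u)) = pattern u"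
      unfolding pick_def by (rule someI) simp
    then have "pick (pattern u) \<in> prop_of L UNIV p"
      unfolding pattern_def by (intro prop_of_max_affine_same_active[OF A _ u]) metis
    then show "prop_of L UNIV p \<inter> pick ` range pattern \<noteq> {}" by blast
  qed
  ultimately show ?thesis by blast
qed

lemma uniform_in_prob_simplex: "(\<lambda>y::'y::finite. 1 / real CARD('y)) \<in> prob_simplex"
  unfolding prob_simplex_def by simp

lemma representative_nonempty: "representative L R S \<Longrightarrow> S \<noteq> {}"
  using uniform_in_prob_simplex unfolding representative_def by blast

lemma minimizable_if_representative: "representative L R S \<Longrightarrow> minimizable L R"
  unfolding representative_def minimizable_def prop_of_def by blast

lemma exp_loss_average:
  "exp_loss (\<lambda>y. (\<Sum>i\<in>I. q i y) / real (card I)) v = (\<Sum>i\<in>I. exp_loss (q i) v) / real (card I)"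
proof -
  have "exp_loss (\<lambda>y. (\<Sum>i\<in>I. q i y) / real (card I)) v =
          (\<Sum>y\<in>UNIV. \<Sum>i\<in>I. q i y * v y) / real (card I)"
    unfolding exp_loss_def by (simp add: sum_divide_distrib sum_distrib_right)
  also have "\<dots> = (\<Sum>i\<in>I. exp_loss (q i) v) / real (card I)"
    unfolding exp_loss_def by (subst sum.swap) simp
  finally show ?thesis .
qed

lemma prob_simplex_average:
  assumes "finite I" "I \<noteq> {}" "\<And>i. i \<in> I \<Longrightarrow> q i \<in> prob_simplex"
  shows "(\<lambda>y. (\<Sum>i\<in>I. q i y) / real (card I)) \<in> prob_simplex"
proof -
  have "(\<Sum>y\<in>UNIV. \<Sum>i\<in>I. q i y) = (\<Sum>i\<in>I. \<Sum>y\<in>UNIV. q i y)"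
    by (rule sum.swap)
  also have "\<dots> = real (card I)"
    using assms(3) unfolding prob_simplex_def by simp
  finally show ?thesis
    using assms unfolding prob_simplex_def
    by (auto simp: sum_divide_distrib[symmetric] intro!: divide_nonneg_nonneg sum_nonneg)
qed

text \<open>If every \<open>s \<in> S\<close> missed some \<open>q s\<close> in the level set of \<open>u\<close>, then at the average of the
  \<open>q s\<close> the report \<open>u\<close> would still be optimal, so the optimal \<open>s\<close> there would tie with \<open>u\<close> at every
  \<open>q s\<close>, in particular at its own.\<close>
lemma level_set_subset_finite_representative:
  assumes "finite S" "representative L R S" "u \<in> R"
  shows "\<exists>s\<in>S. level_set (prop_of L R) u \<subseteq> level_set (prop_of L R) s"
proof (rule ccontr)
  assume "\<not> ?thesis"
  then obtain q where q: "\<And>s. s \<in> S \<Longrightarrow> q s \<in> level_set (prop_of L R) u"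
    "\<And>s. s \<in> S \<Longrightarrow> q s \<notin> level_set (prop_of L R) s"
    unfolding subset_iff by metis
  have q_simplex: "\<And>s. s \<in> S \<Longrightarrow> q s \<in> prob_simplex"
    using q(1) unfolding level_set_def by blast
  have u_opt: "exp_loss (q s) (L u) \<le> exp_loss (q s) (L r)" if "s \<in> S" "r \<in> R" for s r
    using q(1)[OF that(1)] that(2) unfolding level_set_def prop_of_def by blast
  define p where "p y = (\<Sum>s\<in>S. q s y) / real (card S)" for y
  have S_ne: "S \<noteq> {}" using assms(2) by (rule representative_nonempty)
  have "p \<in> prob_simplex"
    unfolding p_def using assms(1) S_ne q_simplex by (rule prob_simplex_average)
  then obtain s0 where s0: "s0 \<in> S" "s0 \<in> prop_of L R p"
    using assms(2) unfolding representative_def by blast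
  have "s0 \<in> R" using s0(2) unfolding prop_of_def by blast
  have "exp_loss (q s0) (L s0) \<le> exp_loss (q s0) (L u)"
  proof (rule ccontr)
    assume "\<not> ?thesis"
    then have "(\<Sum>s\<in>S. exp_loss (q s) (L u)) < (\<Sum>s\<in>S. exp_loss (q s) (L s0))"
      using s0(1) u_opt \<open>s0 \<in> R\<close> by (intro sum_strict_mono_ex1 assms(1)) (auto simp: not_le)
    moreover have "exp_loss p (L s0) \<le> exp_loss p (L u)"
      using s0(2) assms(3) unfolding prop_of_def by blast
    ultimately show False
      using assms(1) S_ne unfolding p_def exp_loss_average by (simp add: divide_le_cancel)
  qed
  then have "q s0 \<in> level_set (prop_of L R) s0"
    using q(1)[OF s0(1)] \<open>s0 \<in> R\<close> unfolding level_set_def prop_of_def by (auto intro: order_trans)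
  then show False using q(2)[OF s0(1)] by blast
qed

lemma indirectly_elicits_trans:
  assumes "indirectly_elicits L R (prop_of L' R')" "indirectly_elicits L' R' \<gamma>"
  shows "indirectly_elicits L R \<gamma>"
  unfolding indirectly_elicits_def
proof (intro conjI ballI)
  show "minimizable L R" using assms(1) unfolding indirectly_elicits_def by blast
  fix r assume "r \<in> R"
  then obtain r' where r': "level_set (prop_of L R) r \<subseteq> level_set (prop_of L' R') r'"
    using assms(1) unfolding indirectly_elicits_def by blast
  show "\<exists>r''. level_set (prop_of L R) r \<subseteq> level_set \<gamma> r''"
  proof (cases "r' \<in> R'")
    case True
    then show ?thesis using r' assms(2) unfolding indirectly_elicits_def by blast
  next
    case False
    then have "level_set (prop_of L' R') r' = {}"
      unfolding level_set_def prop_of_def by blast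
    then show ?thesis using r' by blast
  qed
qed

lemma prop_of_comp_representative:
  assumes "f ` R = S" "representative L R' S" "p \<in> prob_simplex" "i \<in> R"
  shows "i \<in> prop_of (L \<circ> f) R p \<longleftrightarrow> f i \<in> prop_of L R' p"
proof
  assume i_opt: "i \<in> prop_of (L \<circ> f) R p"
  obtain j where j: "j \<in> R" "f j \<in> prop_of L R' p"
    using assms unfolding representative_def by blast
  have "exp_loss p (L (f i)) \<le> exp_loss p (L (f j))"
    using i_opt j(1) unfolding prop_of_def by auto
  then show "f i \<in> prop_of L R' p"
    using j(2) assms(1,2,4) unfolding prop_of_def representative_def by (auto intro: order_trans)
next
  assume "f i \<in> prop_of L R' p"
  then show "i \<in> prop_of (L \<circ> f) R p"
    using assms(1,2,4) unfolding prop_of_def representative_def by auto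
qed

lemma representative_comp_iff:
  assumes "f ` R = S" "representative L R' S" "T \<subseteq> R"
  shows "representative (L \<circ> f) R T \<longleftrightarrow> representative L R' (f ` T)"
proof -
  have "f ` T \<subseteq> R'" using assms unfolding representative_def by blast
  moreover have "prop_of (L \<circ> f) R p \<inter> T \<noteq> {} \<longleftrightarrow> prop_of L R' p \<inter> f ` T \<noteq> {}"
    if "p \<in> prob_simplex" for p
    using prop_of_comp_representative[OF assms(1,2) that] assms(3) by blast
  ultimately show ?thesis using assms(3) unfolding representative_def by blast
qed

lemma indirectly_elicits_comp:
  assumes "f ` R = S" "representative L R' S"
  shows "indirectly_elicits (L \<circ> f) R (prop_of L R')"
  unfolding indirectly_elicits_def
proof (intro conjI ballI exI)
  show "minimizable (L \<circ> f) R"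
    using assms by (intro minimizable_if_representative[of _ _ R]) (simp add: representative_comp_iff)
  fix i assume "i \<in> R"
  then show "level_set (prop_of (L \<circ> f) R) i \<subseteq> level_set (prop_of L R') (f i)"
    using prop_of_comp_representative[OF assms] unfolding level_set_def by blast
qed

lemma min_representative_comp:
  assumes "bij_betw f R S" "finite S" "representative L R' S"
    and least: "\<And>S'. finite S' \<Longrightarrow> representative L R' S' \<Longrightarrow> card S \<le> card S'"
  shows "min_representative (L \<circ> f) R R"
proof -
  have fR: "f ` R = S" and "finite R"
    using assms(1,2) bij_betw_finite by (auto simp: bij_betw_def)
  have "card R \<le> card T" if "representative (L \<circ> f) R T" for T
  proof -
    have "T \<subseteq> R" using that unfolding representative_def by blast
    then have "representative L R' (f ` T)" and "finite T"
      using that representative_comp_iff[OF fR assms(3)] finite_subset[OF _ \<open>finite R\<close>] by auto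
    then have "card S \<le> card (f ` T)" by (intro least) auto
    also have "\<dots> \<le> card T" using \<open>finite T\<close> by (rule card_image_le)
    finally show ?thesis using assms(1) by (simp add: bij_betw_same_card)
  qed
  then show ?thesis
    unfolding min_representative_def
    using representative_comp_iff[OF fR assms(3)] fR assms(3) \<open>finite R\<close> by auto
qed

lemma embeds_via_comp:
  assumes "bij_betw f R S" "representative L UNIV S"
  shows "embeds_via L (L \<circ> f) R R f"
  using assms prop_of_comp_representative[of f R S L UNIV]
  unfolding embeds_via_def bij_betw_def by auto

lemma indirectly_elicits_if_embeds_via:
  fixes L :: "real^'d \<Rightarrow> ('y::finite \<Rightarrow> real)"
  assumes "representative l R S" "finite S" "embeds_via L l R S \<phi>"
  shows "indirectly_elicits L UNIV (prop_of l R)"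
proof -
  have emb: "\<And>p r. p \<in> prob_simplex \<Longrightarrow> r \<in> S \<Longrightarrow> r \<in> prop_of l R p \<longleftrightarrow> \<phi> r \<in> prop_of L UNIV p"
    using assms(3) unfolding embeds_via_def by blast
  have rep: "representative L UNIV (\<phi> ` S)"
    using assms(1) emb unfolding representative_def by blast
  show ?thesis
    unfolding indirectly_elicits_def
  proof (intro conjI ballI)
    show "minimizable L UNIV" using rep by (rule minimizable_if_representative)
    fix u :: "real^'d"
    obtain r where "r \<in> S" "level_set (prop_of L UNIV) u \<subseteq> level_set (prop_of L UNIV) (\<phi> r)"
      using level_set_subset_finite_representative[OF _ rep] assms(2) by blast
    then show "\<exists>r. level_set (prop_of L UNIV) u \<subseteq> level_set (prop_of l R) r"
      using emb unfolding level_set_def by blast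
  qed
qed

theorem lemma4:
  fixes L :: "real^'d \<Rightarrow> ('y::finite \<Rightarrow> real)"
    and \<gamma> :: "('y \<Rightarrow> real) \<Rightarrow> 'b set"
  assumes "polyhedral L"
    and "is_property \<gamma>"
  shows "indirectly_elicits L UNIV \<gamma> \<longleftrightarrow>
    (\<exists>(l :: nat \<Rightarrow> ('y \<Rightarrow> real)) (R :: nat set).
        discrete_loss l R \<and> tightly_embeds L l R \<and> indirectly_elicits l R \<gamma>)"
proof
  assume elicits: "indirectly_elicits L UNIV \<gamma>"
  obtain S0 where "finite S0" "representative L UNIV S0"
    using polyhedral_finite_representative[OF assms(1)] elicits
    unfolding indirectly_elicits_def by blast
  then obtain S where S: "finite S" "representative L UNIV S"
    and least: "\<And>S'. finite S' \<and> representative L UNIV S' \<Longrightarrow> card S \<le> card S'"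
    using ex_has_least_nat[of "\<lambda>S. finite S \<and> representative L UNIV S" S0 card] by blast
  obtain f where f: "bij_betw f {0..<card S} S"
    using ex_bij_betw_nat_finite[OF S(1)] by blast
  then have "f ` {0..<card S} = S" by (simp add: bij_betw_def)
  have "discrete_loss (L \<circ> f) {0..<card S}"
    using assms(1) S representative_nonempty[OF S(2)]
    unfolding discrete_loss_def polyhedral_def nonneg_loss_def by auto
  moreover have "tightly_embeds L (L \<circ> f) {0..<card S}"
    unfolding tightly_embeds_def
    using min_representative_comp[OF f S least] embeds_via_comp[OF f S(2)] by blast
  moreover have "indirectly_elicits (L \<circ> f) {0..<card S} \<gamma>"
    using indirectly_elicits_trans[OF indirectly_elicits_comp[OF _ S(2)] elicits]
      \<open>f ` {0..<card S} = S\<close> by blast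
  ultimately show "\<exists>(l :: nat \<Rightarrow> ('y \<Rightarrow> real)) R.
      discrete_loss l R \<and> tightly_embeds L l R \<and> indirectly_elicits l R \<gamma>"
    by blast
next
  assume "\<exists>(l :: nat \<Rightarrow> ('y \<Rightarrow> real)) R.
      discrete_loss l R \<and> tightly_embeds L l R \<and> indirectly_elicits l R \<gamma>"
  then obtain l :: "nat \<Rightarrow> ('y \<Rightarrow> real)" and R S \<phi> where
    "min_representative l R S" "embeds_via L l R S \<phi>" "indirectly_elicits l R \<gamma>"
    unfolding tightly_embeds_def by blast
  then show "indirectly_elicits L UNIV \<gamma>"
    by (intro indirectly_elicits_trans[OF indirectly_elicits_if_embeds_via])
      (auto simp: min_representative_def)
qed

end
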